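(* Let $T>0$ and consider, on $[0,T]$, the one-dimensional diffusion $dX_t=\alpha(X_t)\,dt+dW_t$, $X_0\sim h^0$, with $\alpha=A'$, under the standing assumptions (a) and (b) of the context, and let $h,\phi,\mathcal{Z}_h,\mathcal{Z}^+_h,l_Y,M,m,\Delta,\mathcal{M}_\lambda$ be as in the context. Let $\mathcal{P}$ be the probability measure on (path, finite point set $\psi\subset[0,T]$) defined by $$\mathcal{P}(dX,d\psi)\propto \mathcal{Z}^+_h(dX)\cdot \mathcal{M}_{\Delta(X)}(d\psi)\cdot \exp(-m(X)T)\prod_{g\in\psi}\frac{M(X)-\phi(X_g)}{\Delta(X)}.$$ For any $\psi$, the conditional law $\mathcal{P}(\cdot\mid\psi)$ over paths has density with respect to $\mathcal{Z}_h$ given by $$\frac{d\mathcal{P}(X\mid\psi)}{d\mathcal{Z}_h}\propto l_Y(X_S)\cdot\exp(-M(X)T)\cdot\prod_{g\in\psi}\big(M(X)-\phi(X_g)\big).$$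
   Context: Standing assumptions: (a) $c:=\int_{\mathbb{R}}\int_{\mathbb{R}} h^0(u_1)\exp\!\big(A(u_2)-A(u_1)-\tfrac{(u_2-u_1)^2}{2T}\big)\,du_2\,du_1<\infty$, where $h^0$ is a probability density on $\mathbb{R}$; (b) there is a constant $\alpha^\downarrow$ with $\alpha^\downarrow\le \tfrac12(\alpha(x)^2+\alpha'(x))$ for all $x$. Define $h(u_1,u_2)=\tfrac1c h^0(u_1)\exp\!\big(A(u_2)-A(u_1)-\tfrac{(u_2-u_1)^2}{2T}\big)$ and $\phi(x)=\tfrac12(\alpha(x)^2+\alpha'(x))-\alpha^\downarrow\ge0$. $\mathcal{Z}_h$ is the law of the $h$-biased Brownian bridge on $[0,T]$: draw $(X_0,X_T)$ from $h$, then connect by a Brownian bridge. Observations at times $S=\{0=s_1<\dots<s_{|S|}=T\}$ have likelihood $l_Y(X_S)=\prod_i l(y_i\mid X_{s_i})$, and $\frac{d\mathcal{Z}^+_h}{d\mathcal{Z}_h}(X)\propto l_Y(X_S)$. $M(X),m(X)$ are path functionals with $0\le m(X)\le\phi(X_t)\le M(X)$ for all $t\in[0,T]$ and $\Delta(X)=M(X)-m(X)>0$. $\mathcal{M}_\lambda$ is the law of a homogeneous rate-$\lambda$ Poisson process on $[0,T]$. *)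

theory Defs
  imports "HOL-Probability.Probability"
begin

text \<open>Normalisation of a finite non-zero measure to a probability measure
  (used to render the proportionality sign in the paper).\<close>
definition normalize_measure :: "'a measure \<Rightarrow> 'a measure" where
  "normalize_measure \<mu> = scale_measure (1 / emeasure \<mu> (space \<mu>)) \<mu>"

definition gauss_kernel :: "real \<Rightarrow> real \<Rightarrow> real" where
  "gauss_kernel s z = exp (- (z\<^sup>2) / (2 * s)) / sqrt (2 * pi * s)"

definition path_space :: "real \<Rightarrow> (real \<Rightarrow> real) measure" where
  "path_space T = restrict_space (Pi\<^sub>M UNIV (\<lambda>_. borel)) {X. continuous_on {0..T} X}"

text \<open>Raw randomness for a point process on [0,T]: a number of points and an iid
  sequence of uniform positions in [0,T].\<close>
definition unif_seq :: "real \<Rightarrow> (nat \<Rightarrow> real) measure" where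
  "unif_seq T = Pi\<^sub>M UNIV (\<lambda>_. uniform_measure (restrict_space lborel {0..T}) {0..T})"

definition enum_pts :: "nat \<times> (nat \<Rightarrow> real) \<Rightarrow> real set" where
  "enum_pts p = (snd p) ` {..<fst p}"

text \<open>Measurable space of finite point sets in [0,T]: the final sigma algebra
  with respect to the enumeration map.\<close>
definition psi_space :: "real \<Rightarrow> real set measure" where
  "psi_space T = sigma {\<psi>. finite \<psi> \<and> \<psi> \<subseteq> {0..T}}
     {B. B \<subseteq> {\<psi>. finite \<psi> \<and> \<psi> \<subseteq> {0..T}} \<and>
         enum_pts -` B \<inter> space (count_space UNIV \<Otimes>\<^sub>M unif_seq T)
           \<in> sets (count_space UNIV \<Otimes>\<^sub>M unif_seq T)}"

definition poisson_pp :: "real \<Rightarrow> real \<Rightarrow> real set measure" where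
  "poisson_pp T rate =
     distr (measure_pmf (poisson_pmf (rate * T)) \<Otimes>\<^sub>M unif_seq T) (psi_space T) enum_pts"

end

theory Submission
  imports Defs
begin

text \<open>Given the path \<open>X\<close>, the point set is a Poisson process of rate \<open>M - m\<close> reweighted by
  \<open>exp (- m T) \<Prod>g\<in>\<psi>. (M - \<phi> (X g)) / (M - m)\<close>. Changing the rate to \<open>1\<close> multiplies
  the Poisson law by \<open>exp ((1 - (M - m)) T) (M - m) ^ |\<psi>|\<close> (the points being a.s.\ distinct), which
  leaves \<open>exp T exp (- M T) \<Prod>g\<in>\<psi>. (M - \<phi> (X g))\<close>. Hence the joint law has density proportional
  to \<open>f X \<psi> = l_Y X exp (- M T) \<Prod>g\<in>\<psi>. (M - \<phi> (X g))\<close> with respect to the product of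
  \<open>Z_h\<close> and the unit-rate Poisson process, and Fubini disintegrates it in \<open>\<psi>\<close>. The normaliser
  \<open>\<integral> f X \<psi> dZ_h\<close> is finite since \<open>exp (- M T) M ^ k \<le> k! / T ^ k\<close>, and it is almost surely
  positive because the \<open>\<psi>\<close>-marginal itself has density proportional to it.\<close>

lemma power_div_fact_le_exp:
  fixes x :: real
  assumes "0 \<le> x"
  shows "x ^ n / fact n \<le> exp x"
proof -
  have "summable (\<lambda>n. x ^ n / fact n)"
    using summable_exp[of x] by (simp add: divide_inverse mult.commute)
  from sum_le_suminf[OF this, of "{n}"] assms have "x ^ n / fact n \<le> (\<Sum>n. x ^ n / fact n)"
    by auto
  also have "\<dots> = exp x"
    by (simp add: exp_def field_simps)
  finally show ?thesis .
qed

lemma borel_measurable_derivative: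
  fixes f f' :: "real \<Rightarrow> real"
  assumes f': "\<And>x. (f has_real_derivative f' x) (at x)"
  shows "f' \<in> borel_measurable borel"
proof (rule borel_measurable_LIMSEQ_real)
  have [measurable]: "f \<in> borel_measurable borel"
    using f' by (intro borel_measurable_continuous_onI continuous_at_imp_continuous_on)
      (auto intro: DERIV_isCont)
  show "(\<lambda>x. (f (x + inverse (real (Suc n))) - f x) / inverse (real (Suc n))) \<in> borel_measurable borel"
    for n
    by measurable
next
  fix x
  have "((\<lambda>h. (f (x + h) - f x) / h) \<longlongrightarrow> f' x) (at 0)"
    using f'[of x] by (simp add: DERIV_def)
  moreover have "filterlim (\<lambda>n. inverse (real (Suc n))) (at 0) sequentially"
    unfolding filterlim_at using LIMSEQ_inverse_real_of_nat by auto
  ultimately show "(\<lambda>n. (f (x + inverse (real (Suc n))) - f x) / inverse (real (Suc n))) \<longlonglongrightarrow> f' x"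
    by (rule filterlim_compose)
qed

lemma prod_image_lessThan:
  fixes u :: "nat \<Rightarrow> 'a" and b :: "'a \<Rightarrow> 'b::comm_monoid_mult"
  shows "(\<Prod>g\<in>u ` {..<n}. b g) = (\<Prod>i<n. if \<exists>j<i. u j = u i then 1 else b (u i))"
proof (induction n)
  case 0
  show ?case by simp
next
  case (Suc n)
  have image: "u ` {..<Suc n} = insert (u n) (u ` {..<n})"
    by (auto simp: lessThan_Suc)
  show ?case
  proof (cases "u n \<in> u ` {..<n}")
    case True
    then show ?thesis
      using Suc.IH by (auto simp: image insert_absorb)
  next
    case False
    then have "\<not> (\<exists>j<n. u j = u n)"
      by (metis imageI lessThan_iff)
    with False Suc.IH show ?thesis
      by (auto simp: image mult.commute)
  qed
qed

lemma borel_measurable_prod_image_lessThan: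
  fixes u :: "'m \<Rightarrow> nat \<Rightarrow> real" and b :: "'m \<Rightarrow> real \<Rightarrow> real"
  assumes k: "k \<in> M \<rightarrow>\<^sub>M count_space UNIV"
    and u: "\<And>i. (\<lambda>x. u x i) \<in> borel_measurable M"
    and b: "\<And>i. (\<lambda>x. b x (u x i)) \<in> borel_measurable M"
  shows "(\<lambda>x. \<Prod>g\<in>u x ` {..<k x}. b x g) \<in> borel_measurable M"
proof (rule measurable_compose_countable'[OF _ k])
  fix n
  have [measurable]: "(\<lambda>x. u x i) \<in> borel_measurable M" "(\<lambda>x. b x (u x i)) \<in> borel_measurable M" for i
    using u b .
  have "(\<lambda>x. \<Prod>i<n. if \<exists>j<i. u x j = u x i then 1 else b x (u x i)) \<in> borel_measurable M"
    by measurable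
  then show "(\<lambda>x. \<Prod>g\<in>u x ` {..<n}. b x g) \<in> borel_measurable M"
    by (simp only: prod_image_lessThan)
qed simp

lemma ennreal_divide_mult_cancel:
  fixes a b :: ennreal
  assumes "a \<le> b" and "b \<noteq> \<infinity>"
  shows "a / b * b = a"
proof (cases "b = 0")
  case True
  with assms show ?thesis
    by simp
next
  case False
  then have "a / b * b = a * (b / b)"
    by (simp add: ennreal_divide_times)
  with False assms(2) show ?thesis
    by (simp add: top.not_eq_extremum)
qed

section \<open>Measurability on path space\<close>

lemma space_path_space: "space (path_space T) = {X. continuous_on {0..T} X}"
  unfolding path_space_def by (simp add: space_restrict_space space_PiM)

lemma measurable_path_eval [measurable]: "(\<lambda>X. X t) \<in> borel_measurable (path_space T)"
  unfolding path_space_def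
  by (intro measurable_restrict_space1 measurable_component_singleton) simp

lemma floor_grid_approx:
  fixes T t :: real and k :: nat
  assumes "0 < T" and "t \<in> {0..T}"
  defines "q \<equiv> T * of_int \<lfloor>real (Suc k) * t / T\<rfloor> / real (Suc k)"
  shows "t - T / real (Suc k) \<le> q" and "q \<le> t" and "q \<in> {0..T}"
proof -
  define y where "y = real (Suc k) * t / T"
  have t_eq: "t = T * y / real (Suc k)"
    using assms(1) by (simp add: y_def)
  have q_eq: "q = T * of_int \<lfloor>y\<rfloor> / real (Suc k)"
    by (simp add: q_def y_def)
  have "T * (y - 1) / real (Suc k) \<le> q" "q \<le> T * y / real (Suc k)"
    unfolding q_eq using assms(1) by (intro divide_right_mono mult_left_mono; linarith)+
  then show "t - T / real (Suc k) \<le> q" "q \<le> t"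
    by (simp_all add: t_eq diff_divide_distrib right_diff_distrib)
  moreover have "0 \<le> q"
    unfolding q_eq using assms by (simp add: y_def)
  ultimately show "q \<in> {0..T}"
    using assms(2) by simp
qed

text \<open>Paths are only continuous on \<open>[0, T]\<close>, so the time is approximated by grid points
  from below.\<close>

lemma measurable_path_eval_joint:
  assumes "0 < T"
  shows "(\<lambda>p. fst p (snd p)) \<in> borel_measurable (path_space T \<Otimes>\<^sub>M restrict_space borel {0..T})"
proof (rule borel_measurable_LIMSEQ_real)
  let ?M = "path_space T \<Otimes>\<^sub>M restrict_space borel {0..T}"
  let ?q = "\<lambda>k t. T * of_int \<lfloor>real (Suc k) * t / T\<rfloor> / real (Suc k)"
  fix k
  have "(\<lambda>p. fst p (T * of_int j / real (Suc k))) \<in> borel_measurable ?M" if "j \<in> UNIV" for j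
    by measurable
  moreover have "(\<lambda>p. \<lfloor>real (Suc k) * snd p / T\<rfloor>) \<in> ?M \<rightarrow>\<^sub>M count_space UNIV"
    by (rule measurable_compose[OF measurable_snd], intro measurable_restrict_space1) measurable
  ultimately show "(\<lambda>p. fst p (?q k (snd p))) \<in> borel_measurable ?M"
    by (rule measurable_compose_countable') simp_all
next
  let ?q = "\<lambda>k t. T * of_int \<lfloor>real (Suc k) * t / T\<rfloor> / real (Suc k)"
  fix p assume "p \<in> space (path_space T \<Otimes>\<^sub>M restrict_space borel {0..T})"
  then have cont: "continuous_on {0..T} (fst p)" and t: "snd p \<in> {0..T}"
    by (auto simp: space_pair_measure space_path_space space_restrict_space)
  have "\<forall>\<^sub>F k in sequentially. snd p - T / real (Suc k) \<le> ?q k (snd p)"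
    and "\<forall>\<^sub>F k in sequentially. ?q k (snd p) \<le> snd p"
    by (intro always_eventually allI floor_grid_approx[OF assms t])+
  moreover have "(\<lambda>k. T / real (Suc k)) \<longlonglongrightarrow> 0"
    using tendsto_mult[OF tendsto_const[of T] LIMSEQ_inverse_real_of_nat] by (simp add: divide_inverse)
  then have "(\<lambda>k. snd p - T / real (Suc k)) \<longlonglongrightarrow> snd p"
    using tendsto_diff[OF tendsto_const] by force
  ultimately have q_lim: "(\<lambda>k. ?q k (snd p)) \<longlonglongrightarrow> snd p"
    by (rule tendsto_sandwich[OF _ _ _ tendsto_const])
  have q_in: "\<forall>\<^sub>F k in sequentially. ?q k (snd p) \<in> {0..T}"
    by (intro always_eventually allI floor_grid_approx[OF assms t])
  show "(\<lambda>k. fst p (?q k (snd p))) \<longlonglongrightarrow> fst p (snd p)"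
    by (rule continuous_on_tendsto_compose[OF cont q_lim t q_in])
qed

section \<open>Uniformly placed points\<close>

abbreviation unif_interval :: "real \<Rightarrow> real measure" where
  "unif_interval T \<equiv> uniform_measure (restrict_space lborel {0..T}) {0..T}"

lemma space_unif_interval: "space (unif_interval T) = {0..T}"
  by (simp add: space_restrict_space)

lemma sets_unif_interval: "sets (unif_interval T) = sets (restrict_space borel {0..T})"
  by (simp add: sets_restrict_space)

lemma prob_space_unif_interval: "0 < T \<Longrightarrow> prob_space (unif_interval T)"
  by (intro prob_space_uniform_measure) (auto simp: emeasure_restrict_space)

lemma borel_measurable_unif_interval_ident: "(\<lambda>x. x) \<in> borel_measurable (unif_interval T)"
  using measurable_restrict_space1[OF measurable_ident, of borel "{0..T}"]
  by (subst measurable_cong_sets[OF sets_unif_interval refl]) (simp add: id_def)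

lemma AE_unif_interval_neq: "AE x in unif_interval T. x \<noteq> c"
proof (rule AE_I')
  have c_sets: "{c} \<inter> {0..T} \<in> sets (restrict_space lborel {0..T})"
    by (subst sets_restrict_space_iff) auto
  have "emeasure (restrict_space lborel {0..T}) ({c} \<inter> {0..T}) = 0"
    by (subst emeasure_restrict_space) (auto intro!: emeasure_lborel_countable)
  then have "emeasure (unif_interval T) ({c} \<inter> {0..T}) = 0"
    using c_sets by (subst emeasure_uniform_measure) (auto simp: Int_absorb1 sets_restrict_space)
  then show "{c} \<inter> {0..T} \<in> null_sets (unif_interval T)"
    using c_sets by (auto intro: null_setsI)
qed (auto simp: space_unif_interval)

lemma prob_space_unif_seq: "0 < T \<Longrightarrow> prob_space (unif_seq T)"
  unfolding unif_seq_def by (intro prob_space_PiM prob_space_unif_interval)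

lemma space_unif_seq: "space (unif_seq T) = UNIV \<rightarrow> {0..T}"
  unfolding unif_seq_def by (simp add: space_PiM space_unif_interval PiE_def)

lemma measurable_unif_seq_component: "(\<lambda>u. u i) \<in> unif_seq T \<rightarrow>\<^sub>M restrict_space borel {0..T}"
  unfolding unif_seq_def
  by (subst measurable_cong_sets[OF refl sets_unif_interval[symmetric]]) simp

lemma borel_measurable_PiM_unif_interval_component:
  assumes "i \<in> I"
  shows "(\<lambda>u. u i) \<in> borel_measurable (Pi\<^sub>M I (\<lambda>_. unif_interval T))"
proof -
  from assms have "(\<lambda>u. u i) \<in> Pi\<^sub>M I (\<lambda>_. unif_interval T) \<rightarrow>\<^sub>M unif_interval T"
    by (rule measurable_component_singleton)
  then show ?thesis
    using borel_measurable_unif_interval_ident by (rule measurable_compose)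
qed

lemma borel_measurable_unif_seq_component [measurable]: "(\<lambda>u. u i) \<in> borel_measurable (unif_seq T)"
  unfolding unif_seq_def by (simp add: borel_measurable_PiM_unif_interval_component)

text \<open>Split off coordinate \<open>i\<close>: coordinate \<open>j\<close> lives in the other factor, and a fixed value is
  hit by the uniform coordinate \<open>i\<close> with probability zero.\<close>

lemma AE_unif_seq_distinct:
  assumes T: "0 < T" and ij: "i \<noteq> j"
  shows "AE u in unif_seq T. u i \<noteq> u j"
proof -
  let ?R = "Pi\<^sub>M (UNIV - {i}) (\<lambda>_. unif_interval T)"
  interpret U1: prob_space "unif_interval T"
    using prob_space_unif_interval[OF T] .
  interpret R: prob_space ?R
    by (intro prob_space_PiM) (simp add: U1.prob_space_axioms)
  interpret pair_sigma_finite "unif_interval T" ?R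
    by unfold_locales
  have split: "distr (unif_interval T \<Otimes>\<^sub>M ?R) (unif_seq T) (\<lambda>(x, u). u(i := x)) = unif_seq T"
    using distr_pair_PiM_eq_PiM[of "UNIV - {i}" "\<lambda>_. unif_interval T" i] U1.prob_space_axioms
    unfolding unif_seq_def by (simp add: insert_absorb)
  have upd_meas: "(\<lambda>(x, u). u(i := x)) \<in> unif_interval T \<Otimes>\<^sub>M ?R \<rightarrow>\<^sub>M unif_seq T"
    unfolding unif_seq_def split_beta' by (rule measurable_fun_upd[where J = "UNIV - {i}"]) auto
  have [measurable]: "(\<lambda>z. snd z j) \<in> borel_measurable (unif_interval T \<Otimes>\<^sub>M ?R)"
    using ij by (intro measurable_compose[OF measurable_snd borel_measurable_PiM_unif_interval_component]) auto
  have [measurable]: "fst \<in> borel_measurable (unif_interval T \<Otimes>\<^sub>M ?R)"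
    by (rule measurable_compose[OF measurable_fst borel_measurable_unif_interval_ident])
  have "AE z in unif_interval T \<Otimes>\<^sub>M ?R. fst z \<noteq> snd z j"
  proof (rule AE_pair_measure)
    show "{z \<in> space (unif_interval T \<Otimes>\<^sub>M ?R). fst z \<noteq> snd z j} \<in> sets (unif_interval T \<Otimes>\<^sub>M ?R)"
      by measurable
    have "AE y in ?R. x \<noteq> y j" for x
      using AE_PiM_component[of "UNIV - {i}" "\<lambda>_. unif_interval T" j "\<lambda>y. y \<noteq> x"]
        AE_unif_interval_neq[where c = x and T = T] U1.prob_space_axioms ij by auto
    then show "AE x in unif_interval T. AE y in ?R. fst (x, y) \<noteq> snd (x, y) j"
      by simp
  qed
  then have "AE z in unif_interval T \<Otimes>\<^sub>M ?R. (case z of (x, u) \<Rightarrow> u(i := x)) i \<noteq> (case z of (x, u) \<Rightarrow> u(i := x)) j"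
    by eventually_elim (use ij in \<open>auto split: prod.splits\<close>)
  moreover have "Measurable.pred (unif_seq T) (\<lambda>u. u i \<noteq> u j)"
    using measurable_equality_set[OF borel_measurable_unif_seq_component borel_measurable_unif_seq_component]
    by (intro pred_intros_logic(2)) (simp add: pred_def)
  ultimately have "AE u in distr (unif_interval T \<Otimes>\<^sub>M ?R) (unif_seq T) (\<lambda>(x, u). u(i := x)). u i \<noteq> u j"
    by (simp add: AE_distr_iff[OF upd_meas])
  then show ?thesis
    unfolding split .
qed

lemma AE_card_enum_pts:
  assumes "0 < T"
  shows "AE u in unif_seq T. card (enum_pts (n, u)) = n"
proof -
  have "AE u in unif_seq T. \<forall>i\<in>{..<n}. \<forall>j\<in>{..<n}. i \<noteq> j \<longrightarrow> u i \<noteq> u j"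
    using AE_unif_seq_distinct[OF assms] by (auto simp: AE_finite_all)
  then show ?thesis
  proof eventually_elim
    case (elim u)
    then have "inj_on u {..<n}"
      unfolding inj_on_def by blast
    then show ?case
      by (simp add: enum_pts_def card_image)
  qed
qed

section \<open>Finite point sets and Poisson processes\<close>

lemma space_psi_space: "space (psi_space T) = {\<psi>. finite \<psi> \<and> \<psi> \<subseteq> {0..T}}"
  unfolding psi_space_def by (rule space_measure_of) auto

lemma enum_pts_in_space: "u \<in> space (unif_seq T) \<Longrightarrow> enum_pts (n, u) \<in> space (psi_space T)"
  by (auto simp: enum_pts_def space_unif_seq space_psi_space)

lemma measurable_enum_pts: "enum_pts \<in> count_space UNIV \<Otimes>\<^sub>M unif_seq T \<rightarrow>\<^sub>M psi_space T"
  unfolding psi_space_def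
  by (rule measurable_measure_of)
    (auto simp: space_pair_measure enum_pts_def space_unif_seq Pi_iff)

lemma measurable_psi_spaceI:
  fixes G :: "real set \<Rightarrow> 'b::topological_space"
  assumes G: "(\<lambda>p. G (enum_pts p)) \<in> borel_measurable (count_space UNIV \<Otimes>\<^sub>M unif_seq T)"
  shows "G \<in> borel_measurable (psi_space T)"
proof (rule measurableI)
  let ?M = "count_space UNIV \<Otimes>\<^sub>M unif_seq T"
  let ?\<Omega> = "{\<psi>. finite \<psi> \<and> \<psi> \<subseteq> {0..T}}"
  fix A :: "'b set"
  assume "A \<in> sets borel"
  have "enum_pts -` (G -` A \<inter> ?\<Omega>) \<inter> space ?M = (\<lambda>p. G (enum_pts p)) -` A \<inter> space ?M"
    using enum_pts_in_space by (auto simp: space_pair_measure space_psi_space)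
  also have "\<dots> \<in> sets ?M"
    using measurable_sets[OF G \<open>A \<in> sets borel\<close>] .
  finally have "G -` A \<inter> ?\<Omega> \<in> sigma_sets ?\<Omega> {B. B \<subseteq> ?\<Omega> \<and> enum_pts -` B \<inter> space ?M \<in> sets ?M}"
    by (intro sigma_sets.Basic) auto
  then show "G -` A \<inter> space (psi_space T) \<in> sets (psi_space T)"
    unfolding psi_space_def by (subst sets_measure_of) (auto simp: space_psi_space[unfolded psi_space_def])
qed auto

lemma borel_measurable_power_card: "(\<lambda>\<psi>. (c::real) ^ card \<psi>) \<in> borel_measurable (psi_space T)"
proof (rule measurable_psi_spaceI)
  have "(\<lambda>p. \<Prod>g\<in>snd p ` {..<fst p}. c) \<in> borel_measurable (count_space UNIV \<Otimes>\<^sub>M unif_seq T)"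
    by (rule borel_measurable_prod_image_lessThan) auto
  then show "(\<lambda>p. c ^ card (enum_pts p)) \<in> borel_measurable (count_space UNIV \<Otimes>\<^sub>M unif_seq T)"
    by (simp add: enum_pts_def)
qed

definition poisson_pp_raw :: "real \<Rightarrow> real \<Rightarrow> (nat \<times> (nat \<Rightarrow> real)) measure" where
  "poisson_pp_raw T r = measure_pmf (poisson_pmf (r * T)) \<Otimes>\<^sub>M unif_seq T"

lemma sets_poisson_pp_raw: "sets (poisson_pp_raw T r) = sets (count_space UNIV \<Otimes>\<^sub>M unif_seq T)"
  unfolding poisson_pp_raw_def by (rule sets_pair_measure_cong) simp_all

lemma measurable_enum_pts_raw [measurable]: "enum_pts \<in> poisson_pp_raw T r \<rightarrow>\<^sub>M psi_space T"
  using measurable_enum_pts by (simp add: measurable_cong_sets[OF sets_poisson_pp_raw refl])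

lemma measurable_fst_raw [measurable]: "fst \<in> poisson_pp_raw T r \<rightarrow>\<^sub>M count_space UNIV"
  unfolding poisson_pp_raw_def
  by (rule measurable_compose[OF measurable_fst]) (simp add: measurable_cong_sets[OF sets_measure_pmf_count_space refl])

lemma measurable_snd_raw [measurable]: "snd \<in> poisson_pp_raw T r \<rightarrow>\<^sub>M unif_seq T"
  unfolding poisson_pp_raw_def by (rule measurable_snd)

lemma prob_space_poisson_pp_raw: "0 < T \<Longrightarrow> prob_space (poisson_pp_raw T r)"
  unfolding poisson_pp_raw_def
  by (intro prob_space_pair prob_space_unif_seq prob_space_measure_pmf)

lemma poisson_pp_eq_distr_raw: "poisson_pp T r = distr (poisson_pp_raw T r) (psi_space T) enum_pts"
  by (simp add: poisson_pp_def poisson_pp_raw_def)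

lemma sets_poisson_pp [measurable_cong]: "sets (poisson_pp T r) = sets (psi_space T)"
  by (simp add: poisson_pp_def)

lemma space_poisson_pp: "space (poisson_pp T r) = {\<psi>. finite \<psi> \<and> \<psi> \<subseteq> {0..T}}"
  by (simp add: poisson_pp_def space_psi_space)

lemma prob_space_poisson_pp: "0 < T \<Longrightarrow> prob_space (poisson_pp T r)"
  unfolding poisson_pp_eq_distr_raw
  by (intro prob_space.prob_space_distr prob_space_poisson_pp_raw measurable_enum_pts_raw)

lemma nn_integral_poisson_pp_raw:
  "H \<in> borel_measurable (psi_space T) \<Longrightarrow>
    (\<integral>\<^sup>+\<psi>. H \<psi> \<partial>poisson_pp T r) = (\<integral>\<^sup>+p. H (enum_pts p) \<partial>poisson_pp_raw T r)"
  unfolding poisson_pp_eq_distr_raw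
  by (rule nn_integral_distr[OF measurable_enum_pts_raw]) (simp only: measurable_distr_eq1)

lemma nn_integral_poisson_pp:
  assumes T: "0 < T" and H: "H \<in> borel_measurable (psi_space T)"
  shows "(\<integral>\<^sup>+\<psi>. H \<psi> \<partial>poisson_pp T r) =
    (\<Sum>n. ennreal (pmf (poisson_pmf (r * T)) n) * (\<integral>\<^sup>+u. H (enum_pts (n, u)) \<partial>unif_seq T))"
proof -
  interpret U: prob_space "unif_seq T"
    using prob_space_unif_seq[OF T] .
  have "(\<lambda>p. H (enum_pts p)) \<in> borel_measurable (poisson_pp_raw T r)"
    by (rule measurable_compose[OF measurable_enum_pts_raw H])
  then have "(\<integral>\<^sup>+p. H (enum_pts p) \<partial>poisson_pp_raw T r) =
      (\<integral>\<^sup>+n. (\<integral>\<^sup>+u. H (enum_pts (n, u)) \<partial>unif_seq T) \<partial>poisson_pmf (r * T))"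
    unfolding poisson_pp_raw_def by (rule U.nn_integral_fst[symmetric])
  then show ?thesis
    by (simp add: nn_integral_poisson_pp_raw[OF H] nn_integral_measure_pmf nn_integral_count_space_nat)
qed

lemma pmf_poisson_change_rate:
  assumes "0 < T" and "0 < r"
  shows "pmf (poisson_pmf (r * T)) n = exp ((1 - r) * T) * r ^ n * pmf (poisson_pmf (1 * T)) n"
  using assms by (simp add: power_mult_distrib field_simps flip: exp_add)

text \<open>The points are a.s.\ distinct, so \<open>card \<psi>\<close> is the Poisson count.\<close>

lemma nn_integral_poisson_pp_change_rate:
  assumes T: "0 < T" and r: "0 < r" and H: "H \<in> borel_measurable (psi_space T)"
  shows "(\<integral>\<^sup>+\<psi>. H \<psi> \<partial>poisson_pp T r) =
    (\<integral>\<^sup>+\<psi>. ennreal (exp ((1 - r) * T) * r ^ card \<psi>) * H \<psi> \<partial>poisson_pp T 1)"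
proof -
  define w where "w n = exp ((1 - r) * T) * r ^ n" for n
  have w_nonneg: "0 \<le> w n" for n
    using r by (simp add: w_def)
  have "(\<lambda>\<psi>. ennreal (w (card \<psi>)) * H \<psi>) \<in> borel_measurable (psi_space T)"
    unfolding w_def using borel_measurable_power_card H by measurable
  then have "(\<integral>\<^sup>+\<psi>. ennreal (w (card \<psi>)) * H \<psi> \<partial>poisson_pp T 1) =
      (\<Sum>n. ennreal (pmf (poisson_pmf (1 * T)) n) *
        (\<integral>\<^sup>+u. ennreal (w (card (enum_pts (n, u)))) * H (enum_pts (n, u)) \<partial>unif_seq T))"
    by (rule nn_integral_poisson_pp[OF T])
  also have "\<dots> = (\<Sum>n. ennreal (pmf (poisson_pmf (r * T)) n) * (\<integral>\<^sup>+u. H (enum_pts (n, u)) \<partial>unif_seq T))"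
  proof (rule suminf_cong)
    fix n
    have "(\<lambda>u. H (enum_pts (n, u))) \<in> borel_measurable (unif_seq T)"
      using measurable_compose[OF measurable_Pair[OF measurable_const measurable_ident_sets]
          measurable_compose[OF measurable_enum_pts H]]
      by simp
    then have "(\<integral>\<^sup>+u. ennreal (w n) * H (enum_pts (n, u)) \<partial>unif_seq T) =
        ennreal (w n) * (\<integral>\<^sup>+u. H (enum_pts (n, u)) \<partial>unif_seq T)"
      by (rule nn_integral_cmult)
    moreover have "(\<integral>\<^sup>+u. ennreal (w (card (enum_pts (n, u)))) * H (enum_pts (n, u)) \<partial>unif_seq T) =
        (\<integral>\<^sup>+u. ennreal (w n) * H (enum_pts (n, u)) \<partial>unif_seq T)"
      by (rule nn_integral_cong_AE) (use AE_card_enum_pts[OF T, of n] in auto)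
    moreover have "pmf (poisson_pmf (r * T)) n = pmf (poisson_pmf (1 * T)) n * w n"
      unfolding pmf_poisson_change_rate[OF T r] w_def by (simp only: mult_ac)
    then have "ennreal (pmf (poisson_pmf (r * T)) n) = ennreal (pmf (poisson_pmf (1 * T)) n) * ennreal (w n)"
      by (simp only: ennreal_mult''[OF w_nonneg])
    ultimately show "ennreal (pmf (poisson_pmf (1 * T)) n) *
        (\<integral>\<^sup>+u. ennreal (w (card (enum_pts (n, u)))) * H (enum_pts (n, u)) \<partial>unif_seq T) =
      ennreal (pmf (poisson_pmf (r * T)) n) * (\<integral>\<^sup>+u. H (enum_pts (n, u)) \<partial>unif_seq T)"
      by (simp add: mult.assoc)
  qed
  also have "\<dots> = (\<integral>\<^sup>+\<psi>. H \<psi> \<partial>poisson_pp T r)"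
    by (rule nn_integral_poisson_pp[OF T H, symmetric])
  finally show ?thesis
    by (simp add: w_def)
qed

section \<open>The augmented path model\<close>

locale augmented_path_model =
  fixes T :: real and Zh :: "(real \<Rightarrow> real) measure" and lY :: "(real \<Rightarrow> real) \<Rightarrow> real"
    and Mf mf :: "(real \<Rightarrow> real) \<Rightarrow> real" and \<phi> :: "real \<Rightarrow> real"
  assumes T_pos: "0 < T"
    and sets_Zh: "sets Zh = sets (path_space T)"
    and prob_space_Zh: "prob_space Zh"
    and \<phi>_measurable [measurable]: "\<phi> \<in> borel_measurable borel"
    and lY_measurable [measurable]: "lY \<in> borel_measurable Zh"
    and lY_nonneg: "\<And>X. 0 \<le> lY X"
    and lY_integral_finite: "(\<integral>\<^sup>+X. ennreal (lY X) \<partial>Zh) < \<infinity>"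
    and Mf_measurable [measurable]: "Mf \<in> borel_measurable Zh"
    and mf_measurable [measurable]: "mf \<in> borel_measurable Zh"
    and \<phi>_bounds: "\<And>X t. X \<in> space Zh \<Longrightarrow> t \<in> {0..T} \<Longrightarrow>
        0 \<le> mf X \<and> mf X \<le> \<phi> (X t) \<and> \<phi> (X t) \<le> Mf X"
    and mf_less_Mf: "\<And>X. X \<in> space Zh \<Longrightarrow> mf X < Mf X"
begin

sublocale Zh: prob_space Zh
  by (rule prob_space_Zh)

sublocale raw: prob_space "poisson_pp_raw T 1"
  by (rule prob_space_poisson_pp_raw[OF T_pos])

sublocale Zh_raw: pair_sigma_finite Zh "poisson_pp_raw T 1"
  by unfold_locales

definition thinning_density :: "(real \<Rightarrow> real) \<Rightarrow> real set \<Rightarrow> real" where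
  "thinning_density X \<psi> = exp (- mf X * T) * (\<Prod>g\<in>\<psi>. (Mf X - \<phi> (X g)) / (Mf X - mf X))"

definition point_weight :: "(real \<Rightarrow> real) \<Rightarrow> real set \<Rightarrow> real" where
  "point_weight X \<psi> = exp (- Mf X * T) * (\<Prod>g\<in>\<psi>. Mf X - \<phi> (X g))"

definition joint_density :: "(real \<Rightarrow> real) \<Rightarrow> real set \<Rightarrow> real" where
  "joint_density X \<psi> = lY X * point_weight X \<psi>"

definition point_kernel :: "(real \<Rightarrow> real) \<Rightarrow> ((real \<Rightarrow> real) \<times> real set) measure" where
  "point_kernel X = distr (density (poisson_pp T (Mf X - mf X)) (\<lambda>\<psi>. ennreal (thinning_density X \<psi>)))
     (Zh \<Otimes>\<^sub>M psi_space T) (\<lambda>\<psi>. (X, \<psi>))"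

definition path_posterior :: "(real \<Rightarrow> real) measure" where
  "path_posterior = normalize_measure (density Zh (\<lambda>X. ennreal (lY X)))"

definition joint_law :: "((real \<Rightarrow> real) \<times> real set) measure" where
  "joint_law = normalize_measure (path_posterior \<bind> point_kernel)"

lemma factor_bounds:
  assumes "X \<in> space Zh" and "g \<in> {0..T}"
  shows "0 \<le> Mf X - \<phi> (X g)" and "Mf X - \<phi> (X g) \<le> Mf X - mf X" and "0 \<le> mf X"
  using \<phi>_bounds[OF assms] by auto

lemma thinning_density_factors:
  assumes X: "X \<in> space Zh" and "g \<in> {0..T}"
  shows "0 \<le> (Mf X - \<phi> (X g)) / (Mf X - mf X)" and "(Mf X - \<phi> (X g)) / (Mf X - mf X) \<le> 1"
  using factor_bounds[OF assms] mf_less_Mf[OF X] by auto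

lemma thinning_density_nonneg:
  assumes "X \<in> space Zh" and "\<psi> \<subseteq> {0..T}"
  shows "0 \<le> thinning_density X \<psi>"
  unfolding thinning_density_def using assms
  by (auto intro!: mult_nonneg_nonneg prod_nonneg thinning_density_factors(1))

lemma thinning_density_le_1:
  assumes X: "X \<in> space Zh" and "\<psi> \<subseteq> {0..T}"
  shows "thinning_density X \<psi> \<le> 1"
proof -
  have "exp (- mf X * T) \<le> 1"
    using factor_bounds(3)[OF X, of 0] T_pos by simp
  moreover have "0 \<le> (\<Prod>g\<in>\<psi>. (Mf X - \<phi> (X g)) / (Mf X - mf X))"
    and "(\<Prod>g\<in>\<psi>. (Mf X - \<phi> (X g)) / (Mf X - mf X)) \<le> 1"
    using assms by (auto intro!: prod_nonneg prod_le_1 thinning_density_factors)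
  ultimately show ?thesis
    unfolding thinning_density_def by (rule mult_le_one)
qed

lemma point_weight_nonneg:
  assumes "X \<in> space Zh" and "\<psi> \<subseteq> {0..T}"
  shows "0 \<le> point_weight X \<psi>"
  unfolding point_weight_def using assms by (auto intro!: mult_nonneg_nonneg prod_nonneg factor_bounds(1))

text \<open>The likelihood ratio for changing the Poisson rate from \<open>Mf X - mf X\<close> to \<open>1\<close> cancels the
  normalisation of the thinning density.\<close>

lemma thinning_density_change_rate:
  assumes X: "X \<in> space Zh" and "finite \<psi>"
  shows "exp ((1 - (Mf X - mf X)) * T) * (Mf X - mf X) ^ card \<psi> * thinning_density X \<psi> =
    exp T * point_weight X \<psi>"
proof -
  have "exp ((1 - (Mf X - mf X)) * T) * (Mf X - mf X) ^ card \<psi> * thinning_density X \<psi> =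
      (exp ((1 - (Mf X - mf X)) * T) * exp (- mf X * T)) *
      ((Mf X - mf X) ^ card \<psi> * (\<Prod>g\<in>\<psi>. (Mf X - \<phi> (X g)) / (Mf X - mf X)))"
    by (simp add: thinning_density_def mult_ac)
  also have "(Mf X - mf X) ^ card \<psi> * (\<Prod>g\<in>\<psi>. (Mf X - \<phi> (X g)) / (Mf X - mf X)) =
      (\<Prod>g\<in>\<psi>. Mf X - \<phi> (X g))"
    using mf_less_Mf[OF X] by (simp add: prod_dividef)
  also have "exp ((1 - (Mf X - mf X)) * T) * exp (- mf X * T) = exp T * exp (- Mf X * T)"
    by (simp add: algebra_simps flip: exp_add)
  finally show ?thesis
    by (simp add: point_weight_def mult_ac)
qed

lemma point_weight_le:
  assumes X: "X \<in> space Zh" and \<psi>: "\<psi> \<subseteq> {0..T}"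
  shows "point_weight X \<psi> \<le> fact (card \<psi>) / T ^ card \<psi>"
proof -
  let ?k = "card \<psi>"
  have "0 \<le> Mf X - \<phi> (X g) \<and> Mf X - \<phi> (X g) \<le> Mf X" if "g \<in> \<psi>" for g
    using \<phi>_bounds[OF X, of g] that \<psi> by auto
  then have "(\<Prod>g\<in>\<psi>. Mf X - \<phi> (X g)) \<le> Mf X ^ ?k"
    using prod_mono[of \<psi> "\<lambda>g. Mf X - \<phi> (X g)" "\<lambda>_. Mf X"] by simp
  then have "point_weight X \<psi> \<le> exp (- Mf X * T) * Mf X ^ ?k"
    unfolding point_weight_def by (rule mult_left_mono) simp
  also have "\<dots> \<le> fact ?k / T ^ ?k"
  proof -
    have "(Mf X * T) ^ ?k / fact ?k \<le> exp (Mf X * T)"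
      using \<phi>_bounds[OF X, of 0] T_pos by (intro power_div_fact_le_exp) simp
    then have "Mf X ^ ?k * T ^ ?k \<le> fact ?k * exp (Mf X * T)"
      by (simp add: power_mult_distrib field_simps)
    then show ?thesis
      using T_pos by (simp add: field_simps exp_minus)
  qed
  finally show ?thesis .
qed

text \<open>Joint measurability in the path and the point set is only available after pulling the
  point set back along \<^const>\<open>enum_pts\<close>, so path-dependent integrals over the Poisson process
  are computed on \<^const>\<open>poisson_pp_raw\<close>.\<close>

lemma measurable_eval_enum [measurable]:
  "(\<lambda>z. fst z (snd (snd z) i)) \<in> borel_measurable (Zh \<Otimes>\<^sub>M poisson_pp_raw T r)"
proof -
  have "fst \<in> Zh \<Otimes>\<^sub>M poisson_pp_raw T r \<rightarrow>\<^sub>M path_space T"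
    using measurable_fst by (simp add: measurable_cong_sets[OF refl sets_Zh, symmetric])
  moreover have "(\<lambda>z. snd (snd z) i) \<in> Zh \<Otimes>\<^sub>M poisson_pp_raw T r \<rightarrow>\<^sub>M restrict_space borel {0..T}"
    by (intro measurable_compose[OF measurable_snd] measurable_compose[OF measurable_snd_raw]
        measurable_unif_seq_component)
  ultimately have "(\<lambda>z. (fst z, snd (snd z) i)) \<in> Zh \<Otimes>\<^sub>M poisson_pp_raw T r \<rightarrow>\<^sub>M
      path_space T \<Otimes>\<^sub>M restrict_space borel {0..T}"
    by (rule measurable_Pair)
  from measurable_compose[OF this measurable_path_eval_joint[OF T_pos]] show ?thesis
    by simp
qed

lemma measurable_point_weight_enum [measurable]:
  "(\<lambda>z. point_weight (fst z) (enum_pts (snd z))) \<in> borel_measurable (Zh \<Otimes>\<^sub>M poisson_pp_raw T r)"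
proof -
  have "(\<lambda>z. \<Prod>g\<in>snd (snd z) ` {..<fst (snd z)}. Mf (fst z) - \<phi> (fst z g))
      \<in> borel_measurable (Zh \<Otimes>\<^sub>M poisson_pp_raw T r)"
    by (rule borel_measurable_prod_image_lessThan) measurable
  then show ?thesis
    unfolding point_weight_def enum_pts_def by measurable
qed

lemma measurable_thinning_density_enum:
  "(\<lambda>z. thinning_density (fst z) (enum_pts (snd z))) \<in> borel_measurable (Zh \<Otimes>\<^sub>M poisson_pp_raw T r)"
proof -
  have "(\<lambda>z. \<Prod>g\<in>snd (snd z) ` {..<fst (snd z)}. (Mf (fst z) - \<phi> (fst z g)) / (Mf (fst z) - mf (fst z)))
      \<in> borel_measurable (Zh \<Otimes>\<^sub>M poisson_pp_raw T r)"
    by (rule borel_measurable_prod_image_lessThan) measurable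
  then show ?thesis
    unfolding thinning_density_def enum_pts_def by measurable
qed

lemma measurable_enum_pts_section:
  assumes "(\<lambda>z. G (fst z) (enum_pts (snd z))) \<in> borel_measurable (Zh \<Otimes>\<^sub>M poisson_pp_raw T 1)"
    and "X \<in> space Zh"
  shows "G X \<in> borel_measurable (psi_space T)"
  using measurable_Pair2[OF assms]
  by (intro measurable_psi_spaceI) (simp add: measurable_cong_sets[OF sets_poisson_pp_raw refl])

lemma measurable_point_weight [measurable]: "X \<in> space Zh \<Longrightarrow> point_weight X \<in> borel_measurable (psi_space T)"
  by (rule measurable_enum_pts_section[OF measurable_point_weight_enum])

lemma measurable_thinning_density: "X \<in> space Zh \<Longrightarrow> thinning_density X \<in> borel_measurable (psi_space T)"
  by (rule measurable_enum_pts_section[OF measurable_thinning_density_enum])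

lemma measurable_enum_pts_Pair [measurable]:
  "(\<lambda>z. (fst z, enum_pts (snd z))) \<in> Zh \<Otimes>\<^sub>M poisson_pp_raw T r \<rightarrow>\<^sub>M Zh \<Otimes>\<^sub>M psi_space T"
  by measurable

lemma sets_point_kernel [measurable_cong]: "sets (point_kernel X) = sets (Zh \<Otimes>\<^sub>M psi_space T)"
  by (simp add: point_kernel_def)

lemma measurable_Pair_point_set:
  "X \<in> space Zh \<Longrightarrow> Pair X \<in> density (poisson_pp T r) d \<rightarrow>\<^sub>M Zh \<Otimes>\<^sub>M psi_space T"
  by (intro measurable_Pair measurable_const measurable_ident_sets) (simp_all add: sets_poisson_pp sets_density)

lemma nn_integral_point_kernel:
  assumes X: "X \<in> space Zh" and F: "F \<in> borel_measurable (Zh \<Otimes>\<^sub>M psi_space T)"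
  shows "(\<integral>\<^sup>+z. F z \<partial>point_kernel X) =
    ennreal (exp T) * (\<integral>\<^sup>+\<psi>. ennreal (point_weight X \<psi>) * F (X, \<psi>) \<partial>poisson_pp T 1)"
proof -
  let ?r = "Mf X - mf X"
  have [measurable]: "thinning_density X \<in> borel_measurable (psi_space T)"
    "point_weight X \<in> borel_measurable (psi_space T)"
    "(\<lambda>\<psi>. F (X, \<psi>)) \<in> borel_measurable (psi_space T)"
    using measurable_thinning_density[OF X] measurable_point_weight[OF X] measurable_Pair2[OF F X] .
  have "(\<integral>\<^sup>+z. F z \<partial>point_kernel X) =
      (\<integral>\<^sup>+\<psi>. F (X, \<psi>) \<partial>density (poisson_pp T ?r) (\<lambda>\<psi>. ennreal (thinning_density X \<psi>)))"
    unfolding point_kernel_def using F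
    by (intro nn_integral_distr[OF measurable_Pair_point_set[OF X]]) simp
  also have "\<dots> = (\<integral>\<^sup>+\<psi>. ennreal (thinning_density X \<psi>) * F (X, \<psi>) \<partial>poisson_pp T ?r)"
    by (rule nn_integral_density) measurable
  also have "\<dots> = (\<integral>\<^sup>+\<psi>. ennreal (exp ((1 - ?r) * T) * ?r ^ card \<psi>) *
      (ennreal (thinning_density X \<psi>) * F (X, \<psi>)) \<partial>poisson_pp T 1)"
    using mf_less_Mf[OF X] by (intro nn_integral_poisson_pp_change_rate T_pos) measurable
  also have "\<dots> = (\<integral>\<^sup>+\<psi>. ennreal (exp T) * (ennreal (point_weight X \<psi>) * F (X, \<psi>)) \<partial>poisson_pp T 1)"
  proof (rule nn_integral_cong)
    fix \<psi>
    assume "\<psi> \<in> space (poisson_pp T 1)"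
    then have \<psi>: "finite \<psi>" "\<psi> \<subseteq> {0..T}"
      by (auto simp: space_poisson_pp)
    define a where "a = exp ((1 - ?r) * T) * ?r ^ card \<psi>"
    have "a * thinning_density X \<psi> = exp T * point_weight X \<psi>"
      unfolding a_def by (rule thinning_density_change_rate[OF X \<psi>(1)])
    moreover have "0 \<le> a"
      using mf_less_Mf[OF X] by (simp add: a_def)
    ultimately show "ennreal a * (ennreal (thinning_density X \<psi>) * F (X, \<psi>)) =
        ennreal (exp T) * (ennreal (point_weight X \<psi>) * F (X, \<psi>))"
      using thinning_density_nonneg[OF X \<psi>(2)] point_weight_nonneg[OF X \<psi>(2)]
      by (metis ennreal_mult exp_ge_zero mult.assoc)
  qed
  also have "\<dots> = ennreal (exp T) * (\<integral>\<^sup>+\<psi>. ennreal (point_weight X \<psi>) * F (X, \<psi>) \<partial>poisson_pp T 1)"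
    by (rule nn_integral_cmult) measurable
  finally show ?thesis .
qed

lemma measurable_joint_density_enum [measurable]:
  "(\<lambda>z. joint_density (fst z) (enum_pts (snd z))) \<in> borel_measurable (Zh \<Otimes>\<^sub>M poisson_pp_raw T r)"
  unfolding joint_density_def by measurable

lemma nn_integral_poisson_pp_section:
  assumes "(\<lambda>z. G (fst z) (enum_pts (snd z))) \<in> borel_measurable (Zh \<Otimes>\<^sub>M poisson_pp_raw T 1)"
    and "X \<in> space Zh"
  shows "(\<integral>\<^sup>+\<psi>. G X \<psi> \<partial>poisson_pp T 1) = (\<integral>\<^sup>+p. G X (enum_pts p) \<partial>poisson_pp_raw T 1)"
  by (rule nn_integral_poisson_pp_raw[OF measurable_enum_pts_section[OF assms]])

lemma borel_measurable_nn_integral_poisson_pp: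
  assumes G: "(\<lambda>z. G (fst z) (enum_pts (snd z))) \<in> borel_measurable (Zh \<Otimes>\<^sub>M poisson_pp_raw T 1)"
  shows "(\<lambda>X. \<integral>\<^sup>+\<psi>. G X \<psi> \<partial>poisson_pp T 1) \<in> borel_measurable Zh"
proof -
  have "(\<lambda>X. \<integral>\<^sup>+p. G X (enum_pts p) \<partial>poisson_pp_raw T 1) \<in> borel_measurable Zh"
    using G by (intro raw.borel_measurable_nn_integral) (simp add: split_beta')
  then show ?thesis
    by (rule measurable_cong[THEN iffD2, rotated]) (rule nn_integral_poisson_pp_section[OF G])
qed

lemma borel_measurable_nn_integral_point_kernel:
  assumes F [measurable]: "F \<in> borel_measurable (Zh \<Otimes>\<^sub>M psi_space T)"
  shows "(\<lambda>X. \<integral>\<^sup>+z. F z \<partial>point_kernel X) \<in> borel_measurable Zh"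
proof -
  have "(\<lambda>X. \<integral>\<^sup>+\<psi>. ennreal (point_weight X \<psi>) * F (X, \<psi>) \<partial>poisson_pp T 1) \<in> borel_measurable Zh"
    by (rule borel_measurable_nn_integral_poisson_pp) measurable
  then have "(\<lambda>X. ennreal (exp T) * (\<integral>\<^sup>+\<psi>. ennreal (point_weight X \<psi>) * F (X, \<psi>) \<partial>poisson_pp T 1))
      \<in> borel_measurable Zh"
    by measurable
  then show ?thesis
    by (rule measurable_cong[THEN iffD2, rotated]) (rule nn_integral_point_kernel[OF _ F])
qed

lemma subprob_space_point_kernel:
  assumes X: "X \<in> space Zh"
  shows "subprob_space (point_kernel X)"
proof -
  let ?Q = "poisson_pp T (Mf X - mf X)"
  let ?d = "\<lambda>\<psi>. ennreal (thinning_density X \<psi>)"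
  interpret Q: prob_space ?Q
    by (rule prob_space_poisson_pp[OF T_pos])
  have [measurable]: "thinning_density X \<in> borel_measurable ?Q"
    using measurable_thinning_density[OF X] by simp
  have "subprob_space (density ?Q ?d)"
  proof (rule subprob_spaceI)
    have "emeasure (density ?Q ?d) (space ?Q) = (\<integral>\<^sup>+\<psi>. ?d \<psi> * indicator (space ?Q) \<psi> \<partial>?Q)"
      by (rule emeasure_density) measurable
    also have "\<dots> \<le> (\<integral>\<^sup>+\<psi>. indicator (space ?Q) \<psi> \<partial>?Q)"
      using thinning_density_le_1[OF X]
      by (intro nn_integral_mono) (auto simp: indicator_def space_poisson_pp)
    also have "\<dots> = 1"
      by (simp add: Q.emeasure_space_1)
    finally show "emeasure (density ?Q ?d) (space (density ?Q ?d)) \<le> 1"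
      by simp
  qed (auto simp: space_poisson_pp)
  then show ?thesis
    unfolding point_kernel_def
    by (rule subprob_space.subprob_space_distr[OF _ measurable_Pair_point_set[OF X]])
      (use X in \<open>auto simp: space_pair_measure space_psi_space\<close>)
qed

lemma measurable_point_kernel: "point_kernel \<in> Zh \<rightarrow>\<^sub>M subprob_algebra (Zh \<Otimes>\<^sub>M psi_space T)"
proof (rule measurable_subprob_algebra)
  fix A
  assume "A \<in> sets (Zh \<Otimes>\<^sub>M psi_space T)"
  then show "(\<lambda>X. emeasure (point_kernel X) A) \<in> borel_measurable Zh"
    using borel_measurable_nn_integral_point_kernel[of "indicator A"] by simp
qed (simp_all add: subprob_space_point_kernel sets_point_kernel)

lemma sets_path_posterior [measurable_cong]: "sets path_posterior = sets Zh"
  by (simp add: path_posterior_def normalize_measure_def)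

lemma space_path_posterior: "space path_posterior = space Zh"
  by (simp add: path_posterior_def normalize_measure_def space_scale_measure)

lemma sets_posterior_bind: "sets (path_posterior \<bind> point_kernel) = sets (Zh \<Otimes>\<^sub>M psi_space T)"
  by (rule sets_bind[OF sets_point_kernel]) (simp add: space_path_posterior Zh.not_empty)

lemma sets_joint_law [measurable_cong]: "sets joint_law = sets (Zh \<Otimes>\<^sub>M psi_space T)"
  by (simp add: joint_law_def normalize_measure_def sets_posterior_bind)

lemma nn_integral_point_kernel_weighted:
  assumes X: "X \<in> space Zh" and F: "F \<in> borel_measurable (Zh \<Otimes>\<^sub>M psi_space T)"
  shows "ennreal (lY X) * (\<integral>\<^sup>+z. F z \<partial>point_kernel X) =
    ennreal (exp T) * (\<integral>\<^sup>+\<psi>. ennreal (joint_density X \<psi>) * F (X, \<psi>) \<partial>poisson_pp T 1)"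
proof -
  have [measurable]: "point_weight X \<in> borel_measurable (psi_space T)"
    "(\<lambda>\<psi>. F (X, \<psi>)) \<in> borel_measurable (psi_space T)"
    using measurable_point_weight[OF X] measurable_Pair2[OF F X] .
  have "ennreal (lY X) * (\<integral>\<^sup>+\<psi>. ennreal (point_weight X \<psi>) * F (X, \<psi>) \<partial>poisson_pp T 1) =
      (\<integral>\<^sup>+\<psi>. ennreal (lY X) * (ennreal (point_weight X \<psi>) * F (X, \<psi>)) \<partial>poisson_pp T 1)"
    by (rule nn_integral_cmult[symmetric]) measurable
  also have "\<dots> = (\<integral>\<^sup>+\<psi>. ennreal (joint_density X \<psi>) * F (X, \<psi>) \<partial>poisson_pp T 1)"
  proof (rule nn_integral_cong)
    fix \<psi>
    assume "\<psi> \<in> space (poisson_pp T 1)"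
    then have "0 \<le> point_weight X \<psi>"
      by (intro point_weight_nonneg[OF X]) (auto simp: space_poisson_pp)
    then show "ennreal (lY X) * (ennreal (point_weight X \<psi>) * F (X, \<psi>)) =
        ennreal (joint_density X \<psi>) * F (X, \<psi>)"
      unfolding joint_density_def by (simp add: ennreal_mult[OF lY_nonneg] mult.assoc)
  qed
  finally show ?thesis
    by (simp add: nn_integral_point_kernel[OF X F] mult.left_commute)
qed

definition joint_law_scale :: ennreal where
  "joint_law_scale =
     1 / emeasure (path_posterior \<bind> point_kernel) (space (path_posterior \<bind> point_kernel)) *
     (1 / emeasure (density Zh (\<lambda>X. ennreal (lY X))) (space (density Zh (\<lambda>X. ennreal (lY X)))) *
      ennreal (exp T))"

lemma nn_integral_joint_law:
  assumes F [measurable]: "F \<in> borel_measurable (Zh \<Otimes>\<^sub>M psi_space T)"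
  shows "(\<integral>\<^sup>+z. F z \<partial>joint_law) =
    joint_law_scale * (\<integral>\<^sup>+X. \<integral>\<^sup>+\<psi>. ennreal (joint_density X \<psi>) * F (X, \<psi>) \<partial>poisson_pp T 1 \<partial>Zh)"
proof -
  let ?D = "density Zh (\<lambda>X. ennreal (lY X))"
  let ?B = "path_posterior \<bind> point_kernel"
  have [measurable]: "(\<lambda>X. \<integral>\<^sup>+z. F z \<partial>point_kernel X) \<in> borel_measurable Zh"
    by (rule borel_measurable_nn_integral_point_kernel[OF F])
  have "(\<integral>\<^sup>+z. F z \<partial>joint_law) = 1 / emeasure ?B (space ?B) * (\<integral>\<^sup>+z. F z \<partial>?B)"
    unfolding joint_law_def normalize_measure_def
    by (rule nn_integral_scale_measure) (simp add: measurable_cong_sets[OF sets_posterior_bind refl])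
  also have "(\<integral>\<^sup>+z. F z \<partial>?B) = (\<integral>\<^sup>+X. \<integral>\<^sup>+z. F z \<partial>point_kernel X \<partial>path_posterior)"
    using measurable_point_kernel
    by (intro nn_integral_bind[OF F]) (simp add: measurable_cong_sets[OF sets_path_posterior refl])
  also have "\<dots> = 1 / emeasure ?D (space ?D) * (\<integral>\<^sup>+X. \<integral>\<^sup>+z. F z \<partial>point_kernel X \<partial>?D)"
    unfolding path_posterior_def normalize_measure_def by (rule nn_integral_scale_measure) simp
  also have "(\<integral>\<^sup>+X. \<integral>\<^sup>+z. F z \<partial>point_kernel X \<partial>?D) =
      (\<integral>\<^sup>+X. ennreal (lY X) * (\<integral>\<^sup>+z. F z \<partial>point_kernel X) \<partial>Zh)"
    by (rule nn_integral_density) measurable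
  also have "\<dots> = (\<integral>\<^sup>+X. ennreal (exp T) *
      (\<integral>\<^sup>+\<psi>. ennreal (joint_density X \<psi>) * F (X, \<psi>) \<partial>poisson_pp T 1) \<partial>Zh)"
    by (rule nn_integral_cong) (rule nn_integral_point_kernel_weighted[OF _ F])
  also have "\<dots> = ennreal (exp T) *
      (\<integral>\<^sup>+X. \<integral>\<^sup>+\<psi>. ennreal (joint_density X \<psi>) * F (X, \<psi>) \<partial>poisson_pp T 1 \<partial>Zh)"
    by (intro nn_integral_cmult borel_measurable_nn_integral_poisson_pp) measurable
  finally show ?thesis
    by (simp only: joint_law_scale_def mult.assoc)
qed

lemma borel_measurable_marginal_weight [measurable]:
  assumes [measurable]: "A \<in> borel_measurable Zh"
  shows "(\<lambda>\<psi>. \<integral>\<^sup>+X. A X * ennreal (joint_density X \<psi>) \<partial>Zh) \<in> borel_measurable (psi_space T)"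
proof (rule measurable_psi_spaceI)
  have "(\<lambda>(X, p). A X * ennreal (joint_density X (enum_pts p))) \<in> borel_measurable (Zh \<Otimes>\<^sub>M poisson_pp_raw T 1)"
    unfolding split_beta' by measurable
  then have "(\<lambda>(p, X). A X * ennreal (joint_density X (enum_pts p))) \<in> borel_measurable (poisson_pp_raw T 1 \<Otimes>\<^sub>M Zh)"
    by (subst measurable_pair_swap_iff) (simp add: split_beta')
  then have "(\<lambda>p. \<integral>\<^sup>+X. A X * ennreal (joint_density X (enum_pts p)) \<partial>Zh) \<in> borel_measurable (poisson_pp_raw T 1)"
    by (rule Zh.borel_measurable_nn_integral)
  then show "(\<lambda>p. \<integral>\<^sup>+X. A X * ennreal (joint_density X (enum_pts p)) \<partial>Zh)
      \<in> borel_measurable (count_space UNIV \<Otimes>\<^sub>M unif_seq T)"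
    by (simp add: measurable_cong_sets[OF sets_poisson_pp_raw refl])
qed

lemma nn_integral_joint_density_swap:
  assumes A [measurable]: "A \<in> borel_measurable Zh" and G [measurable]: "G \<in> borel_measurable (psi_space T)"
  shows "(\<integral>\<^sup>+X. \<integral>\<^sup>+\<psi>. ennreal (joint_density X \<psi>) * (A X * G \<psi>) \<partial>poisson_pp T 1 \<partial>Zh) =
    (\<integral>\<^sup>+\<psi>. G \<psi> * (\<integral>\<^sup>+X. A X * ennreal (joint_density X \<psi>) \<partial>Zh) \<partial>poisson_pp T 1)"
proof -
  let ?f = "\<lambda>X p. ennreal (joint_density X (enum_pts p)) * (A X * G (enum_pts p))"
  have f_meas: "case_prod ?f \<in> borel_measurable (Zh \<Otimes>\<^sub>M poisson_pp_raw T 1)"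
    unfolding split_beta' by measurable
  have "(\<integral>\<^sup>+X. \<integral>\<^sup>+\<psi>. ennreal (joint_density X \<psi>) * (A X * G \<psi>) \<partial>poisson_pp T 1 \<partial>Zh) =
      (\<integral>\<^sup>+X. \<integral>\<^sup>+p. ?f X p \<partial>poisson_pp_raw T 1 \<partial>Zh)"
    by (rule nn_integral_cong, rule nn_integral_poisson_pp_section[where
        G = "\<lambda>X \<psi>. ennreal (joint_density X \<psi>) * (A X * G \<psi>)"]) measurable
  also have "\<dots> = (\<integral>\<^sup>+p. \<integral>\<^sup>+X. ?f X p \<partial>Zh \<partial>poisson_pp_raw T 1)"
    by (rule Zh_raw.Fubini'[OF f_meas, symmetric])
  also have "\<dots> = (\<integral>\<^sup>+p. G (enum_pts p) * (\<integral>\<^sup>+X. A X * ennreal (joint_density X (enum_pts p)) \<partial>Zh)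
      \<partial>poisson_pp_raw T 1)"
  proof (rule nn_integral_cong)
    fix p
    assume "p \<in> space (poisson_pp_raw T 1)"
    from measurable_Pair1[OF measurable_joint_density_enum this]
    have "(\<lambda>X. joint_density X (enum_pts p)) \<in> borel_measurable Zh"
      by simp
    then have "(\<lambda>X. A X * ennreal (joint_density X (enum_pts p))) \<in> borel_measurable Zh"
      by measurable
    then show "(\<integral>\<^sup>+X. ?f X p \<partial>Zh) = G (enum_pts p) * (\<integral>\<^sup>+X. A X * ennreal (joint_density X (enum_pts p)) \<partial>Zh)"
      by (simp add: nn_integral_cmult[symmetric] ac_simps)
  qed
  also have "\<dots> = (\<integral>\<^sup>+\<psi>. G \<psi> * (\<integral>\<^sup>+X. A X * ennreal (joint_density X \<psi>) \<partial>Zh) \<partial>poisson_pp T 1)"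
    by (rule nn_integral_poisson_pp_raw[symmetric]) measurable
  finally show ?thesis .
qed

lemma nn_integral_joint_density_finite:
  assumes "\<psi> \<in> space (psi_space T)"
  shows "(\<integral>\<^sup>+X. ennreal (joint_density X \<psi>) \<partial>Zh) < \<infinity>"
proof -
  let ?c = "fact (card \<psi>) / T ^ card \<psi> :: real"
  have \<psi>: "\<psi> \<subseteq> {0..T}"
    using assms by (simp add: space_psi_space)
  have "(\<integral>\<^sup>+X. ennreal (joint_density X \<psi>) \<partial>Zh) \<le> (\<integral>\<^sup>+X. ennreal ?c * ennreal (lY X) \<partial>Zh)"
  proof (rule nn_integral_mono)
    fix X
    assume X: "X \<in> space Zh"
    have le: "joint_density X \<psi> \<le> ?c * lY X"
      unfolding joint_density_def using mult_left_mono[OF point_weight_le[OF X \<psi>] lY_nonneg[of X]]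
      by (simp add: ac_simps)
    have "ennreal ?c * ennreal (lY X) = ennreal (?c * lY X)"
      using T_pos lY_nonneg[of X] by (intro ennreal_mult[symmetric]) auto
    then show "ennreal (joint_density X \<psi>) \<le> ennreal ?c * ennreal (lY X)"
      using ennreal_leI[OF le] by simp
  qed
  also have "\<dots> = ennreal ?c * (\<integral>\<^sup>+X. ennreal (lY X) \<partial>Zh)"
    by (rule nn_integral_cmult) measurable
  also have "\<dots> < \<infinity>"
    using lY_integral_finite by (simp add: ennreal_mult_less_top)
  finally show ?thesis .
qed

lemma nn_integral_joint_law_product:
  assumes [measurable]: "A \<in> borel_measurable Zh" "G \<in> borel_measurable (psi_space T)"
  shows "(\<integral>\<^sup>+z. A (fst z) * G (snd z) \<partial>joint_law) =
    joint_law_scale * (\<integral>\<^sup>+\<psi>. G \<psi> * (\<integral>\<^sup>+X. A X * ennreal (joint_density X \<psi>) \<partial>Zh) \<partial>poisson_pp T 1)"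
  using nn_integral_joint_law[of "\<lambda>z. A (fst z) * G (snd z)"] nn_integral_joint_density_swap[OF assms]
  by simp

lemma nn_integral_point_set_marginal:
  assumes [measurable]: "G \<in> borel_measurable (psi_space T)"
  shows "(\<integral>\<^sup>+\<psi>. G \<psi> \<partial>distr joint_law (psi_space T) snd) =
    joint_law_scale * (\<integral>\<^sup>+\<psi>. G \<psi> * (\<integral>\<^sup>+X. ennreal (joint_density X \<psi>) \<partial>Zh) \<partial>poisson_pp T 1)"
proof -
  have "(\<integral>\<^sup>+\<psi>. G \<psi> \<partial>distr joint_law (psi_space T) snd) = (\<integral>\<^sup>+z. 1 * G (snd z) \<partial>joint_law)"
    by (simp add: nn_integral_distr)
  also have "\<dots> = joint_law_scale *
      (\<integral>\<^sup>+\<psi>. G \<psi> * (\<integral>\<^sup>+X. 1 * ennreal (joint_density X \<psi>) \<partial>Zh) \<partial>poisson_pp T 1)"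
    by (rule nn_integral_joint_law_product) simp_all
  finally show ?thesis
    by simp
qed

lemma AE_joint_density_normaliser:
  "AE \<psi> in distr joint_law (psi_space T) snd.
     0 < (\<integral>\<^sup>+X. ennreal (joint_density X \<psi>) \<partial>Zh) \<and> (\<integral>\<^sup>+X. ennreal (joint_density X \<psi>) \<partial>Zh) < \<infinity>"
proof (rule AE_I')
  let ?N = "\<lambda>\<psi>. \<integral>\<^sup>+X. ennreal (joint_density X \<psi>) \<partial>Zh"
  let ?Z = "{\<psi> \<in> space (psi_space T). ?N \<psi> = 0}"
  have [measurable]: "?N \<in> borel_measurable (psi_space T)"
    using borel_measurable_marginal_weight[of "\<lambda>_. 1"] by simp
  then have Z: "?Z \<in> sets (psi_space T)"
    by measurable
  have "emeasure (distr joint_law (psi_space T) snd) ?Z = (\<integral>\<^sup>+\<psi>. indicator ?Z \<psi> \<partial>distr joint_law (psi_space T) snd)"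
    using Z by simp
  also have "\<dots> = joint_law_scale * (\<integral>\<^sup>+\<psi>. indicator ?Z \<psi> * ?N \<psi> \<partial>poisson_pp T 1)"
    using Z by (intro nn_integral_point_set_marginal) simp
  also have "(\<integral>\<^sup>+\<psi>. indicator ?Z \<psi> * ?N \<psi> \<partial>poisson_pp T 1) = (\<integral>\<^sup>+\<psi>. 0 \<partial>poisson_pp T 1)"
    by (rule nn_integral_cong) (simp add: indicator_def)
  finally show "?Z \<in> null_sets (distr joint_law (psi_space T) snd)"
    using Z by (auto intro: null_setsI)
  show "{\<psi> \<in> space (distr joint_law (psi_space T) snd). \<not> (0 < ?N \<psi> \<and> ?N \<psi> < \<infinity>)} \<subseteq> ?Z"
    using nn_integral_joint_density_finite by (auto simp: not_gr_zero)
qed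

lemma emeasure_joint_law_rectangle:
  assumes Xs: "Xs \<in> sets Zh" and B: "B \<in> sets (psi_space T)"
  shows "emeasure joint_law (Xs \<times> B) =
    (\<integral>\<^sup>+\<psi>. indicator B \<psi> * ((\<integral>\<^sup>+X. indicator Xs X * ennreal (joint_density X \<psi>) \<partial>Zh) /
      (\<integral>\<^sup>+X. ennreal (joint_density X \<psi>) \<partial>Zh)) \<partial>distr joint_law (psi_space T) snd)"
proof -
  let ?N = "\<lambda>\<psi>. \<integral>\<^sup>+X. ennreal (joint_density X \<psi>) \<partial>Zh"
  let ?I = "\<lambda>\<psi>. \<integral>\<^sup>+X. indicator Xs X * ennreal (joint_density X \<psi>) \<partial>Zh"
  have [measurable]: "Xs \<in> sets Zh" "B \<in> sets (psi_space T)" "?N \<in> borel_measurable (psi_space T)"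
    using Xs B borel_measurable_marginal_weight[of "\<lambda>_. 1"] by simp_all
  have "emeasure joint_law (Xs \<times> B) = (\<integral>\<^sup>+z. indicator Xs (fst z) * indicator B (snd z) \<partial>joint_law)"
    by (simp add: nn_integral_indicator[symmetric] indicator_times split_beta')
  also have "\<dots> = joint_law_scale * (\<integral>\<^sup>+\<psi>. indicator B \<psi> * ?I \<psi> \<partial>poisson_pp T 1)"
    by (rule nn_integral_joint_law_product) simp_all
  also have "(\<integral>\<^sup>+\<psi>. indicator B \<psi> * ?I \<psi> \<partial>poisson_pp T 1) =
      (\<integral>\<^sup>+\<psi>. indicator B \<psi> * (?I \<psi> / ?N \<psi>) * ?N \<psi> \<partial>poisson_pp T 1)"
  proof (rule nn_integral_cong)
    fix \<psi>
    assume "\<psi> \<in> space (poisson_pp T 1)"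
    then have "?N \<psi> < \<infinity>"
      by (intro nn_integral_joint_density_finite) (simp add: space_poisson_pp space_psi_space)
    moreover have "?I \<psi> \<le> ?N \<psi>"
      by (intro nn_integral_mono) (simp add: indicator_def)
    ultimately have "?I \<psi> / ?N \<psi> * ?N \<psi> = ?I \<psi>"
      by (intro ennreal_divide_mult_cancel) auto
    then show "indicator B \<psi> * ?I \<psi> = indicator B \<psi> * (?I \<psi> / ?N \<psi>) * ?N \<psi>"
      by (simp add: mult.assoc)
  qed
  also have "joint_law_scale * \<dots> =
      (\<integral>\<^sup>+\<psi>. indicator B \<psi> * (?I \<psi> / ?N \<psi>) \<partial>distr joint_law (psi_space T) snd)"
    by (rule nn_integral_point_set_marginal[symmetric]) measurable
  finally show ?thesis .
qed

end

theorem proposition1: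
  fixes T :: real
    and \<alpha> \<alpha>' A h0 :: "real \<Rightarrow> real"
    and \<alpha>_low :: real
    and Zh :: "(real \<Rightarrow> real) measure"
    and S :: "real list" and ys :: "'y list" and l :: "'y \<Rightarrow> real \<Rightarrow> real"
    and Mf mf :: "(real \<Rightarrow> real) \<Rightarrow> real"
  defines "c \<equiv> \<integral>\<^sup>+ u1. \<integral>\<^sup>+ u2. ennreal (h0 u1 * exp (A u2 - A u1 - (u2 - u1)\<^sup>2 / (2 * T))) \<partial>lborel \<partial>lborel"
  defines "h \<equiv> (\<lambda>u1 u2. h0 u1 * exp (A u2 - A u1 - (u2 - u1)\<^sup>2 / (2 * T)) / enn2real c)"
  defines "\<phi> \<equiv> (\<lambda>x. (\<alpha> x ^ 2 + \<alpha>' x) / 2 - \<alpha>_low)"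
  defines "lY \<equiv> (\<lambda>X. \<Prod>i<length S. l (ys ! i) (X (S ! i)))"
  defines "\<Delta> \<equiv> (\<lambda>X. Mf X - mf X)"
  defines "Zplus \<equiv> normalize_measure (density Zh (\<lambda>X. ennreal (lY X)))"
  defines "P \<equiv> normalize_measure (Zplus \<bind> (\<lambda>X.
              distr (density (poisson_pp T (\<Delta> X))
                       (\<lambda>\<psi>. ennreal (exp (- mf X * T) * (\<Prod>g\<in>\<psi>. (Mf X - \<phi> (X g)) / \<Delta> X))))
                    (Zh \<Otimes>\<^sub>M psi_space T) (\<lambda>\<psi>. (X, \<psi>))))"
  defines "Ppsi \<equiv> distr P (psi_space T) snd"
  defines "f \<equiv> (\<lambda>X \<psi>. lY X * exp (- Mf X * T) * (\<Prod>g\<in>\<psi>. Mf X - \<phi> (X g)))"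
  assumes T_pos: "0 < T"
    and A_deriv: "\<And>x. (A has_real_derivative \<alpha> x) (at x)"
    and \<alpha>_deriv: "\<And>x. (\<alpha> has_real_derivative \<alpha>' x) (at x)"
    and h0_meas: "h0 \<in> borel_measurable borel"
    and h0_nonneg: "\<And>x. 0 \<le> h0 x"
    and h0_prob: "(\<integral>\<^sup>+ x. ennreal (h0 x) \<partial>lborel) = 1"
    and c_finite: "c < \<infinity>"
    and \<alpha>_low: "\<And>x. \<alpha>_low \<le> (\<alpha> x ^ 2 + \<alpha>' x) / 2"
    and Zh_sets: "sets Zh = sets (path_space T)"
    and Zh_space: "space Zh = space (path_space T)"
    and Zh_prob: "prob_space Zh"
    and Zh_fdd: "\<And>(n::nat) (t::nat \<Rightarrow> real). 1 \<le> n \<Longrightarrow> t 0 = 0 \<Longrightarrow> t n = T \<Longrightarrow>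
        (\<And>i. i < n \<Longrightarrow> t i < t (Suc i)) \<Longrightarrow>
        distr Zh (Pi\<^sub>M {..n} (\<lambda>_. borel)) (\<lambda>X. \<lambda>i\<in>{..n}. X (t i)) =
        density (Pi\<^sub>M {..n} (\<lambda>_. lborel))
          (\<lambda>x. ennreal (h (x 0) (x n) * (\<Prod>i<n. gauss_kernel (t (Suc i) - t i) (x (Suc i) - x i))
                        / gauss_kernel T (x n - x 0)))"
    and S_len: "length S = length ys" "S \<noteq> []"
    and S_ends: "S ! 0 = 0" "last S = T"
    and S_sorted: "sorted_wrt (<) S"
    and l_meas: "\<And>y. l y \<in> borel_measurable borel"
    and l_nonneg: "\<And>y x. 0 \<le> l y x"
    and lY_norm: "0 < (\<integral>\<^sup>+ X. ennreal (lY X) \<partial>Zh)" "(\<integral>\<^sup>+ X. ennreal (lY X) \<partial>Zh) < \<infinity>"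
    and Mf_meas: "Mf \<in> borel_measurable Zh"
    and mf_meas: "mf \<in> borel_measurable Zh"
    and bounds: "\<And>X t. X \<in> space Zh \<Longrightarrow> t \<in> {0..T} \<Longrightarrow>
        0 \<le> mf X \<and> mf X \<le> \<phi> (X t) \<and> \<phi> (X t) \<le> Mf X"
    and \<Delta>_pos: "\<And>X. X \<in> space Zh \<Longrightarrow> 0 < \<Delta> X"
  shows "(AE \<psi> in Ppsi. 0 < (\<integral>\<^sup>+ X. ennreal (f X \<psi>) \<partial>Zh) \<and> (\<integral>\<^sup>+ X. ennreal (f X \<psi>) \<partial>Zh) < \<infinity>)
       \<and> (\<forall>Xs \<in> sets Zh. \<forall>B \<in> sets (psi_space T).
            emeasure P (Xs \<times> B) =
              (\<integral>\<^sup>+ \<psi>. indicator B \<psi> *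
                  ((\<integral>\<^sup>+ X. indicator Xs X * ennreal (f X \<psi>) \<partial>Zh) / (\<integral>\<^sup>+ X. ennreal (f X \<psi>) \<partial>Zh)) \<partial>Ppsi))"
proof -
  \<comment> \<open>Only measurability, the bounds on \<open>\<phi>\<close> and the finiteness of \<open>l_Y\<close> enter.\<close>
  have [measurable]: "\<alpha> \<in> borel_measurable borel"
    using \<alpha>_deriv by (intro borel_measurable_continuous_onI continuous_at_imp_continuous_on)
      (auto intro: DERIV_isCont)
  have [measurable]: "\<alpha>' \<in> borel_measurable borel"
    by (rule borel_measurable_derivative[OF \<alpha>_deriv])
  have [measurable]: "(\<lambda>X. X t) \<in> borel_measurable Zh" for t
    using measurable_path_eval by (simp add: measurable_cong_sets[OF Zh_sets refl])
  have [measurable]: "l y \<in> borel_measurable borel" for y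
    by (rule l_meas)
  have "augmented_path_model T Zh lY Mf mf \<phi>"
  proof (rule augmented_path_model.intro)
    show "\<phi> \<in> borel_measurable borel"
      unfolding \<phi>_def by measurable
    show "lY \<in> borel_measurable Zh"
      unfolding lY_def by measurable
    show "0 \<le> lY X" for X
      unfolding lY_def by (simp add: l_nonneg prod_nonneg)
    show "mf X < Mf X" if "X \<in> space Zh" for X
      using \<Delta>_pos[OF that] by (simp add: \<Delta>_def)
  qed (fact T_pos Zh_sets Zh_prob lY_norm(2) Mf_meas mf_meas bounds)+
  then interpret augmented_path_model T Zh lY Mf mf \<phi> .
  have P_eq: "P = joint_law"
    unfolding P_def Zplus_def joint_law_def path_posterior_def point_kernel_def thinning_density_def \<Delta>_def ..
  have f_eq: "f = joint_density"
    by (intro ext) (simp add: f_def joint_density_def point_weight_def mult.assoc)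
  show ?thesis
    unfolding Ppsi_def P_eq f_eq
    using AE_joint_density_normaliser emeasure_joint_law_rectangle by blast
qed

end
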